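(* Let $G$ be a structurally saturated sequent. Then the relation $R_G$ on clusters of $G$ is a (partial) order and the relation $\le_G$ on clusters of $G$ is a preorder. If moreover $G$ is layered, then $\le_G$ on clusters is also an order.
   Context: A sequent $G$ is $\mathcal{R},\Gamma\Rightarrow\Delta$ with $\mathcal{R}$ a set of relational atoms $xRy$, $x\le y$ between labels and $\Gamma,\Delta$ multisets of labelled formulas $x{:}A$; $x\le_G y$, $xR_Gy$ mean the atom is in $\mathcal{R}$, and $x{:}C^\bullet$ means $x{:}C\in\Gamma$. $G$ is structurally saturated if: $x\le_G y$ and $x{:}C^\bullet$ imply $y{:}C^\bullet$; $xR_Gy$ and $y\le_G z$ imply some $u$ with $x\le_G u$, $uR_Gz$; $xR_Gy$ and $x\le_G z$ imply some $u$ with $y\le_G u$, $zR_Gu$; $\le_G$ and $R_G$ are transitive and reflexive on all labels. For structurally saturated $G$, a cluster is an equivalence class of $R_G\cap R_G^{-1}$. On clusters: $C_1\le_G C_2$ iff for every $y\in C_2$ there is $x\in C_1$ with $x\le_G y$; $C_1 R_G C_2$ iff there are $x\in C_1$, $y\in C_2$ with $xR_Gy$. A layer is an equivalence class of the reflexive-transitive closure of $R_G\cup R_G^{-1}$. $G$ is layered if for all labels $x,x',y,y'$: (1) if $x,y$ are in the same layer and $x\ne y$, then neither $x\le_G y$ nor $y\le_G x$; (2) if $x,y$ are in the same layer, $x',y'$ are in the same layer, $x\le_G x'$ and $x\ne x'$, then not $y'\le_G y$. *)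

theory Defs
  imports Main "HOL-Library.Multiset"
begin

datatype 'l ratom = RelAt 'l 'l | LeqAt 'l 'l

text \<open>A labelled sequent  R, Gamma => Delta ; labelled formulas are pairs (label, formula).\<close>
record ('l, 'f) sequent =
  rels  :: "'l ratom set"
  gam   :: "('l \<times> 'f) multiset"
  delta :: "('l \<times> 'f) multiset"

fun atom_labels :: "'l ratom \<Rightarrow> 'l set" where
  "atom_labels (RelAt x y) = {x, y}"
| "atom_labels (LeqAt x y) = {x, y}"

definition labels :: "('l, 'f) sequent \<Rightarrow> 'l set" where
  "labels G = (\<Union>a\<in>rels G. atom_labels a) \<union> fst ` set_mset (gam G) \<union> fst ` set_mset (delta G)"

definition leqG :: "('l, 'f) sequent \<Rightarrow> 'l \<Rightarrow> 'l \<Rightarrow> bool" where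
  "leqG G x y \<longleftrightarrow> LeqAt x y \<in> rels G"

definition relG :: "('l, 'f) sequent \<Rightarrow> 'l \<Rightarrow> 'l \<Rightarrow> bool" where
  "relG G x y \<longleftrightarrow> RelAt x y \<in> rels G"

definition struct_saturated :: "('l, 'f) sequent \<Rightarrow> bool" where
  "struct_saturated G \<longleftrightarrow>
     (\<forall>x y C. leqG G x y \<and> (x, C) \<in># gam G \<longrightarrow> (y, C) \<in># gam G) \<and>
     (\<forall>x y z. relG G x y \<and> leqG G y z \<longrightarrow> (\<exists>u. leqG G x u \<and> relG G u z)) \<and>
     (\<forall>x y z. relG G x y \<and> leqG G x z \<longrightarrow> (\<exists>u. leqG G y u \<and> relG G z u)) \<and>
     (\<forall>x y z. leqG G x y \<and> leqG G y z \<longrightarrow> leqG G x z) \<and>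
     (\<forall>x y z. relG G x y \<and> relG G y z \<longrightarrow> relG G x z) \<and>
     (\<forall>x\<in>labels G. leqG G x x) \<and>
     (\<forall>x\<in>labels G. relG G x x)"

definition clusters :: "('l, 'f) sequent \<Rightarrow> 'l set set" where
  "clusters G = labels G // {(x, y). relG G x y \<and> relG G y x}"

definition cluster_leq :: "('l, 'f) sequent \<Rightarrow> 'l set \<Rightarrow> 'l set \<Rightarrow> bool" where
  "cluster_leq G C1 C2 \<longleftrightarrow> (\<forall>y\<in>C2. \<exists>x\<in>C1. leqG G x y)"

definition cluster_R :: "('l, 'f) sequent \<Rightarrow> 'l set \<Rightarrow> 'l set \<Rightarrow> bool" where
  "cluster_R G C1 C2 \<longleftrightarrow> (\<exists>x\<in>C1. \<exists>y\<in>C2. relG G x y)"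

definition cluster_leq_rel :: "('l, 'f) sequent \<Rightarrow> ('l set \<times> 'l set) set" where
  "cluster_leq_rel G = {(C1, C2). C1 \<in> clusters G \<and> C2 \<in> clusters G \<and> cluster_leq G C1 C2}"

definition cluster_R_rel :: "('l, 'f) sequent \<Rightarrow> ('l set \<times> 'l set) set" where
  "cluster_R_rel G = {(C1, C2). C1 \<in> clusters G \<and> C2 \<in> clusters G \<and> cluster_R G C1 C2}"

definition same_layer :: "('l, 'f) sequent \<Rightarrow> 'l \<Rightarrow> 'l \<Rightarrow> bool" where
  "same_layer G x y \<longleftrightarrow>
     (x, y) \<in> ({(a, b). relG G a b} \<union> {(a, b). relG G a b}\<inverse>)\<^sup>*"

definition layered :: "('l, 'f) sequent \<Rightarrow> bool" where
  "layered G \<longleftrightarrow>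
     (\<forall>x\<in>labels G. \<forall>y\<in>labels G.
        same_layer G x y \<and> x \<noteq> y \<longrightarrow> \<not> leqG G x y \<and> \<not> leqG G y x) \<and>
     (\<forall>x\<in>labels G. \<forall>y\<in>labels G. \<forall>x'\<in>labels G. \<forall>y'\<in>labels G.
        same_layer G x y \<and> same_layer G x' y' \<and> leqG G x x' \<and> x \<noteq> x'
          \<longrightarrow> \<not> leqG G y' y)"

end

theory Submission
  imports Defs
begin

text \<open>Clusters are the
  classes of the equivalence \<open>R\<^sub>G \<inter> R\<^sub>G\<inverse>\<close>, so \<open>R\<^sub>G\<close> becomes antisymmetric on them, and
  \<open>\<le>\<^sub>G\<close> lifts to clusters as a preorder. For antisymmetry of \<open>\<le>\<^sub>G\<close>, clusters \<open>C\<^sub>1 \<le> C\<^sub>2 \<le> C\<^sub>1\<close>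
  give \<open>x \<le> y\<close> and \<open>x' \<le> x\<close> with \<open>x \<in> C\<^sub>1\<close> and \<open>y, x' \<in> C\<^sub>2\<close>; as \<open>y\<close> and \<open>x'\<close> share a layer,
  the second layering condition forces \<open>x = y\<close>, so the two clusters meet and coincide.\<close>

lemma relG_labels:
  assumes "relG G x y" shows "x \<in> labels G" "y \<in> labels G"
  using assms unfolding relG_def labels_def by force+

lemma leqG_labels:
  assumes "leqG G x y" shows "x \<in> labels G" "y \<in> labels G"
  using assms unfolding leqG_def labels_def by force+

lemma struct_saturated_relG_trans:
  "struct_saturated G \<Longrightarrow> relG G x y \<Longrightarrow> relG G y z \<Longrightarrow> relG G x z"
  unfolding struct_saturated_def by blast

lemma struct_saturated_leqG_trans:
  "struct_saturated G \<Longrightarrow> leqG G x y \<Longrightarrow> leqG G y z \<Longrightarrow> leqG G x z"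
  unfolding struct_saturated_def by blast

lemma struct_saturated_relG_refl:
  "struct_saturated G \<Longrightarrow> x \<in> labels G \<Longrightarrow> relG G x x"
  unfolding struct_saturated_def by blast

lemma struct_saturated_leqG_refl:
  "struct_saturated G \<Longrightarrow> x \<in> labels G \<Longrightarrow> leqG G x x"
  unfolding struct_saturated_def by blast

definition cluster_equiv :: "('l, 'f) sequent \<Rightarrow> ('l \<times> 'l) set" where
  "cluster_equiv G = {(x, y). relG G x y \<and> relG G y x}"

lemma clusters_eq_quotient: "clusters G = labels G // cluster_equiv G"
  unfolding clusters_def cluster_equiv_def ..

lemma equiv_cluster_equiv:
  assumes "struct_saturated G"
  shows "equiv (labels G) (cluster_equiv G)"
proof (rule equivI)
  show "cluster_equiv G \<subseteq> labels G \<times> labels G"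
    unfolding cluster_equiv_def by (auto dest: relG_labels)
  show "refl_on (labels G) (cluster_equiv G)"
    unfolding cluster_equiv_def by (rule refl_onI) (simp add: struct_saturated_relG_refl[OF assms])
  show "sym (cluster_equiv G)"
    unfolding cluster_equiv_def by (rule symI) simp
  show "trans (cluster_equiv G)"
    unfolding cluster_equiv_def by (rule transI) (auto intro: struct_saturated_relG_trans[OF assms])
qed

context
  fixes G :: "('l, 'f) sequent"
  assumes sat: "struct_saturated G"
begin

lemma cluster_nonempty: "C \<in> clusters G \<Longrightarrow> C \<noteq> {}"
  using in_quotient_imp_non_empty[OF equiv_cluster_equiv[OF sat]]
  by (simp add: clusters_eq_quotient)

lemma cluster_subset_labels: "C \<in> clusters G \<Longrightarrow> C \<subseteq> labels G"
  using in_quotient_imp_subset[OF equiv_cluster_equiv[OF sat]]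
  by (simp add: clusters_eq_quotient)

lemma cluster_relG:
  assumes "C \<in> clusters G" "x \<in> C" "y \<in> C"
  shows "relG G x y"
proof -
  have "(x, y) \<in> cluster_equiv G"
    using in_quotient_imp_in_rel[OF equiv_cluster_equiv[OF sat]] assms
    by (simp add: clusters_eq_quotient)
  then show ?thesis unfolding cluster_equiv_def by simp
qed

lemma clusters_eqI: "C \<in> clusters G \<Longrightarrow> D \<in> clusters G \<Longrightarrow> x \<in> C \<Longrightarrow> x \<in> D \<Longrightarrow> C = D"
  using quotient_disj[OF equiv_cluster_equiv[OF sat]]
  by (fastforce simp: clusters_eq_quotient)

lemma clusters_eqI_relG:
  assumes "C \<in> clusters G" "D \<in> clusters G" "x \<in> C" "y \<in> D" "relG G x y" "relG G y x"
  shows "C = D"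
proof (rule clusters_eqI)
  show "y \<in> C"
    using in_quotient_imp_closed[OF equiv_cluster_equiv[OF sat]] assms
    by (auto simp: clusters_eq_quotient cluster_equiv_def)
qed (use assms in auto)

theorem partial_order_on_cluster_R: "partial_order_on (clusters G) (cluster_R_rel G)"
  unfolding partial_order_on_def preorder_on_def
proof (intro conjI)
  show "cluster_R_rel G \<subseteq> clusters G \<times> clusters G"
    unfolding cluster_R_rel_def by auto
  show "refl_on (clusters G) (cluster_R_rel G)"
  proof (rule refl_onI)
    fix C assume C: "C \<in> clusters G"
    then obtain x where "x \<in> C" using cluster_nonempty by blast
    then show "(C, C) \<in> cluster_R_rel G"
      using C cluster_relG by (auto simp: cluster_R_rel_def cluster_R_def)
  qed
  show "trans (cluster_R_rel G)"
  proof (rule transI)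
    fix C\<^sub>1 C\<^sub>2 C\<^sub>3
    assume "(C\<^sub>1, C\<^sub>2) \<in> cluster_R_rel G" "(C\<^sub>2, C\<^sub>3) \<in> cluster_R_rel G"
    then obtain x\<^sub>1 y\<^sub>2 x\<^sub>2 y\<^sub>3 where "x\<^sub>1 \<in> C\<^sub>1" "y\<^sub>2 \<in> C\<^sub>2" "x\<^sub>2 \<in> C\<^sub>2" "y\<^sub>3 \<in> C\<^sub>3"
      and "relG G x\<^sub>1 y\<^sub>2" "relG G x\<^sub>2 y\<^sub>3" and C: "C\<^sub>1 \<in> clusters G" "C\<^sub>2 \<in> clusters G" "C\<^sub>3 \<in> clusters G"
      unfolding cluster_R_rel_def cluster_R_def by blast
    moreover from this have "relG G y\<^sub>2 x\<^sub>2" using cluster_relG by blast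
    ultimately have "relG G x\<^sub>1 y\<^sub>3" using struct_saturated_relG_trans[OF sat] by blast
    with \<open>x\<^sub>1 \<in> C\<^sub>1\<close> \<open>y\<^sub>3 \<in> C\<^sub>3\<close> C show "(C\<^sub>1, C\<^sub>3) \<in> cluster_R_rel G"
      unfolding cluster_R_rel_def cluster_R_def by blast
  qed
  show "antisym (cluster_R_rel G)"
  proof (rule antisymI)
    fix C\<^sub>1 C\<^sub>2
    assume "(C\<^sub>1, C\<^sub>2) \<in> cluster_R_rel G" "(C\<^sub>2, C\<^sub>1) \<in> cluster_R_rel G"
    then obtain x\<^sub>1 y\<^sub>2 x\<^sub>2 y\<^sub>1 where "x\<^sub>1 \<in> C\<^sub>1" "y\<^sub>2 \<in> C\<^sub>2" "x\<^sub>2 \<in> C\<^sub>2" "y\<^sub>1 \<in> C\<^sub>1"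
      and "relG G x\<^sub>1 y\<^sub>2" "relG G x\<^sub>2 y\<^sub>1" and C: "C\<^sub>1 \<in> clusters G" "C\<^sub>2 \<in> clusters G"
      unfolding cluster_R_rel_def cluster_R_def by blast
    moreover from this have "relG G y\<^sub>2 x\<^sub>2" "relG G y\<^sub>1 x\<^sub>1" using cluster_relG by blast+
    ultimately have "relG G y\<^sub>2 x\<^sub>1" using struct_saturated_relG_trans[OF sat] by blast
    with \<open>relG G x\<^sub>1 y\<^sub>2\<close> \<open>x\<^sub>1 \<in> C\<^sub>1\<close> \<open>y\<^sub>2 \<in> C\<^sub>2\<close> C show "C\<^sub>1 = C\<^sub>2"
      using clusters_eqI_relG by blast
  qed
qed

theorem preorder_on_cluster_leq: "preorder_on (clusters G) (cluster_leq_rel G)"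
  unfolding preorder_on_def
proof (intro conjI)
  show "cluster_leq_rel G \<subseteq> clusters G \<times> clusters G"
    unfolding cluster_leq_rel_def by auto
  show "refl_on (clusters G) (cluster_leq_rel G)"
    using cluster_subset_labels struct_saturated_leqG_refl[OF sat]
    by (fastforce intro: refl_onI simp: cluster_leq_rel_def cluster_leq_def)
  show "trans (cluster_leq_rel G)"
    using struct_saturated_leqG_trans[OF sat]
    unfolding trans_def cluster_leq_rel_def cluster_leq_def by (clarsimp, meson)
qed

end

lemma layered_leqG_return_eq:
  assumes "layered G" "leqG G x y" "leqG G y' x" "same_layer G y y'"
  shows "x = y"
proof (rule ccontr)
  assume "x \<noteq> y"
  have "same_layer G x x" unfolding same_layer_def by simp
  with assms \<open>x \<noteq> y\<close> show False
    unfolding layered_def by (meson leqG_labels)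
qed

theorem partial_order_on_cluster_leq:
  assumes sat: "struct_saturated G" and "layered G"
  shows "partial_order_on (clusters G) (cluster_leq_rel G)"
  unfolding partial_order_on_def
proof (intro conjI preorder_on_cluster_leq[OF sat] antisymI)
  fix C\<^sub>1 C\<^sub>2
  assume "(C\<^sub>1, C\<^sub>2) \<in> cluster_leq_rel G" "(C\<^sub>2, C\<^sub>1) \<in> cluster_leq_rel G"
  then have C: "C\<^sub>1 \<in> clusters G" "C\<^sub>2 \<in> clusters G"
    and le12: "\<forall>y\<in>C\<^sub>2. \<exists>x\<in>C\<^sub>1. leqG G x y" and le21: "\<forall>y\<in>C\<^sub>1. \<exists>x\<in>C\<^sub>2. leqG G x y"
    unfolding cluster_leq_rel_def cluster_leq_def by simp_all
  obtain y where "y \<in> C\<^sub>2" using cluster_nonempty[OF sat C(2)] by blast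
  with le12 obtain x where "x \<in> C\<^sub>1" "leqG G x y" by blast
  with le21 obtain x' where "x' \<in> C\<^sub>2" "leqG G x' x" by blast
  have "same_layer G y x'"
    using cluster_relG[OF sat C(2) \<open>y \<in> C\<^sub>2\<close> \<open>x' \<in> C\<^sub>2\<close>]
    unfolding same_layer_def by (intro r_into_rtrancl) simp
  with \<open>layered G\<close> \<open>leqG G x y\<close> \<open>leqG G x' x\<close> have "x = y"
    by (rule layered_leqG_return_eq)
  with \<open>x \<in> C\<^sub>1\<close> \<open>y \<in> C\<^sub>2\<close> show "C\<^sub>1 = C\<^sub>2"
    using clusters_eqI[OF sat C] by simp
qed

theorem mainTheorem5:
  fixes G :: "('l, 'f) sequent"
  assumes "struct_saturated G"
  shows "partial_order_on (clusters G) (cluster_R_rel G)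
       \<and> preorder_on (clusters G) (cluster_leq_rel G)
       \<and> (layered G \<longrightarrow> partial_order_on (clusters G) (cluster_leq_rel G))"
  using partial_order_on_cluster_R[OF assms] preorder_on_cluster_leq[OF assms]
    partial_order_on_cluster_leq[OF assms] by blast

end
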